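(* Assume $A$ is nonsingular and $\Omega$ is a slice domain. Let $f,g$ be tame slice regular functions on $\Omega$. If, for each $x\in\Omega\setminus\mathbb{R}$, $f'_s(x)$, $g'_s(x)$ and $(f\cdot g)'_s(x)$ belong to $C_A$, then \[\bigcup_{x\in V(f\cdot g)}\mathbb{S}_x=\bigcup_{x\in V(f)\cup V(g)}\mathbb{S}_x.\]
   Context: Let $A$ be a finite-dimensional real algebra with unit $1$ ($\mathbb{R}$ identified with $\mathbb{R}1$) which is alternative (the associator $(x,y,z)=(xy)z-x(yz)$ is alternating), with a $^*$-involution $x\mapsto x^c$ (real linear, $(x^c)^c=x$, $(xy)^c=y^cx^c$, $r^c=r$ for $r\in\mathbb{R}$). Let $t(x)=x+x^c$, $n(x)=xx^c$; $A$ is nonsingular if $n(x)=0$ implies $x=0$. $C_A=\{0\}\cup\{a:n(a),n(a^c)$ are invertible elements of the center of $A\}$, where the center is $\{r:(r,a,b)=0,\ ra=ar\ \forall a,b\}$. $\mathbb{S}_A=\{J\in A:t(J)=0,n(J)=1\}$ (assumed non-empty), $Q_A=\mathbb{R}\cup\{x:t(x),n(x)\in\mathbb{R},4n(x)>t(x)^2\}$; every $x\in Q_A$ is $\alpha+\beta J$ with $\alpha,\beta\in\mathbb{R}$, $J\in\mathbb{S}_A$; $x^c=\alpha-\beta J$, $\mathrm{im}(x)=x-t(x)/2$, $\mathbb{S}_x=\{\alpha+\beta I:I\in\mathbb{S}_A\}$. Let $D\subseteq\mathbb{C}$ be open, connected, meeting $\mathbb{R}$ and invariant under conjugation, and $\Omega=\{\alpha+\beta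 J:\alpha+i\beta\in D,J\in\mathbb{S}_A\}$ (a slice domain). $A_{\mathbb{C}}=\{a+\imath b\}$ with $(a+\imath b)(a'+\imath b')=aa'-bb'+\imath(ab'+ba')$, $\overline{a+\imath b}=a-\imath b$, $(a+\imath b)^c=a^c+\imath b^c$. A stem function $F=F_1+\imath F_2:D\to A_{\mathbb{C}}$ satisfies $F(\bar z)=\overline{F(z)}$ and induces $f=\mathcal{I}(F)$, $f(\alpha+\beta J)=F_1(\alpha+i\beta)+JF_2(\alpha+i\beta)$; $f$ is slice regular if $F$ is $\mathscr{C}^1$ and $\frac12\big(\frac{\partial F}{\partial\alpha}+\imath\frac{\partial F}{\partial\beta}\big)\equiv0$. $f\cdot g=\mathcal{I}(FG)$, $f^c=\mathcal{I}(F^c)$ ($F^c(z)=F(z)^c$), $N(f)=f\cdot f^c$; $f$ is slice preserving if $F_1,F_2$ are real valued, tame if $N(f)$ is slice preserving and $N(f)=N(f^c)$. $V(h)=\{x:h(x)=0\}$. $f'_s(x)=\frac12\mathrm{im}(x)^{-1}(f(x)-f(x^c))$ for $x\in\Omega\setminus\mathbb{R}$. *)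

theory Defs
  imports "HOL-Analysis.Analysis"
begin

text \<open>A finite-dimensional real algebra A is modelled as a euclidean_space type 'a
  (only its real vector space structure and its natural topology are used),
  together with an explicit multiplication mul, unit one and involution cj.
  The algebra need not be associative.\<close>

definition assoc :: "('a::real_vector \<Rightarrow> 'a \<Rightarrow> 'a) \<Rightarrow> 'a \<Rightarrow> 'a \<Rightarrow> 'a \<Rightarrow> 'a" where
  "assoc mul x y z = mul (mul x y) z - mul x (mul y z)"

definition alt_star_alg :: "('a::euclidean_space \<Rightarrow> 'a \<Rightarrow> 'a) \<Rightarrow> 'a \<Rightarrow> ('a \<Rightarrow> 'a) \<Rightarrow> bool" where
  "alt_star_alg mul one cj \<longleftrightarrow>
     bilinear mul \<and> one \<noteq> 0 \<and>
     (\<forall>x. mul one x = x \<and> mul x one = x) \<and>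
     (\<forall>x y. assoc mul x x y = 0 \<and> assoc mul x y x = 0 \<and> assoc mul y x x = 0) \<and>
     linear cj \<and> (\<forall>x. cj (cj x) = x) \<and>
     (\<forall>x y. cj (mul x y) = mul (cj y) (cj x)) \<and>
     (\<forall>r. cj (r *\<^sub>R one) = r *\<^sub>R one)"

definition reals_in :: "'a::real_vector \<Rightarrow> 'a set" where
  "reals_in one = range (\<lambda>r. r *\<^sub>R one)"

definition tr :: "('a::real_vector \<Rightarrow> 'a) \<Rightarrow> 'a \<Rightarrow> 'a" where
  "tr cj x = x + cj x"

definition nrm :: "('a::real_vector \<Rightarrow> 'a \<Rightarrow> 'a) \<Rightarrow> ('a \<Rightarrow> 'a) \<Rightarrow> 'a \<Rightarrow> 'a" where
  "nrm mul cj x = mul x (cj x)"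

definition imp :: "('a::real_vector \<Rightarrow> 'a) \<Rightarrow> 'a \<Rightarrow> 'a" where
  "imp cj x = x - (1/2) *\<^sub>R tr cj x"

definition nonsingular :: "('a::real_vector \<Rightarrow> 'a \<Rightarrow> 'a) \<Rightarrow> ('a \<Rightarrow> 'a) \<Rightarrow> bool" where
  "nonsingular mul cj \<longleftrightarrow> (\<forall>x. nrm mul cj x = 0 \<longrightarrow> x = 0)"

definition center :: "('a::real_vector \<Rightarrow> 'a \<Rightarrow> 'a) \<Rightarrow> 'a set" where
  "center mul = {r. \<forall>a b. assoc mul r a b = 0 \<and> mul r a = mul a r}"

definition invertible_el :: "('a::real_vector \<Rightarrow> 'a \<Rightarrow> 'a) \<Rightarrow> 'a \<Rightarrow> 'a \<Rightarrow> bool" where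
  "invertible_el mul one r \<longleftrightarrow> (\<exists>s. mul r s = one \<and> mul s r = one)"

definition ainv :: "('a::real_vector \<Rightarrow> 'a \<Rightarrow> 'a) \<Rightarrow> 'a \<Rightarrow> 'a \<Rightarrow> 'a" where
  "ainv mul one x = (THE y. mul x y = one \<and> mul y x = one)"

definition CA :: "('a::real_vector \<Rightarrow> 'a \<Rightarrow> 'a) \<Rightarrow> 'a \<Rightarrow> ('a \<Rightarrow> 'a) \<Rightarrow> 'a set" where
  "CA mul one cj = {0} \<union>
     {a. nrm mul cj a \<in> center mul \<and> invertible_el mul one (nrm mul cj a) \<and>
         nrm mul cj (cj a) \<in> center mul \<and> invertible_el mul one (nrm mul cj (cj a))}"

definition SA :: "('a::real_vector \<Rightarrow> 'a \<Rightarrow> 'a) \<Rightarrow> 'a \<Rightarrow> ('a \<Rightarrow> 'a) \<Rightarrow> 'a set" where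
  "SA mul one cj = {J. tr cj J = 0 \<and> nrm mul cj J = one}"

definition sphere_of :: "('a::real_vector \<Rightarrow> 'a \<Rightarrow> 'a) \<Rightarrow> 'a \<Rightarrow> ('a \<Rightarrow> 'a) \<Rightarrow> 'a \<Rightarrow> 'a set" where
  "sphere_of mul one cj x =
     {y. \<exists>\<alpha> \<beta> I J. I \<in> SA mul one cj \<and> J \<in> SA mul one cj \<and>
          x = \<alpha> *\<^sub>R one + \<beta> *\<^sub>R J \<and> y = \<alpha> *\<^sub>R one + \<beta> *\<^sub>R I}"

definition OmegaD :: "('a::real_vector \<Rightarrow> 'a \<Rightarrow> 'a) \<Rightarrow> 'a \<Rightarrow> ('a \<Rightarrow> 'a) \<Rightarrow> complex set \<Rightarrow> 'a set" where
  "OmegaD mul one cj D = {Re z *\<^sub>R one + Im z *\<^sub>R J | z J. z \<in> D \<and> J \<in> SA mul one cj}"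

text \<open>Stem functions D \<rightarrow> A_C, with A_C = A \<times> A, (a,b) standing for a + i b.\<close>
definition stem :: "complex set \<Rightarrow> (complex \<Rightarrow> 'a::real_vector \<times> 'a) \<Rightarrow> bool" where
  "stem D F \<longleftrightarrow> (\<forall>z\<in>D. F (cnj z) = (fst (F z), - snd (F z)))"

text \<open>The slice function f = I(F): f(alpha + beta J) = F1(alpha + i beta) + J F2(alpha + i beta).\<close>
definition induced :: "('a::real_vector \<Rightarrow> 'a \<Rightarrow> 'a) \<Rightarrow> 'a \<Rightarrow> ('a \<Rightarrow> 'a) \<Rightarrow> complex set
    \<Rightarrow> (complex \<Rightarrow> 'a \<times> 'a) \<Rightarrow> 'a \<Rightarrow> 'a" where
  "induced mul one cj D F x =
     (let (z, J) = (SOME (z, J). z \<in> D \<and> J \<in> SA mul one cj \<and> x = Re z *\<^sub>R one + Im z *\<^sub>R J)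
      in fst (F z) + mul J (snd (F z)))"

text \<open>Slice regularity of I(F): F is a C^1 stem function with (dF/d alpha + i dF/d beta) = 0.\<close>
definition slice_regular_stem :: "complex set \<Rightarrow> (complex \<Rightarrow> 'a::euclidean_space \<times> 'a) \<Rightarrow> bool" where
  "slice_regular_stem D F \<longleftrightarrow> stem D F \<and>
     (\<exists>F' :: complex \<Rightarrow> (complex \<Rightarrow>\<^sub>L ('a \<times> 'a)).
        (\<forall>z\<in>D. (F has_derivative blinfun_apply (F' z)) (at z)) \<and>
        continuous_on D F' \<and>
        (\<forall>z\<in>D. fst (blinfun_apply (F' z) 1) - snd (blinfun_apply (F' z) \<i>) = 0 \<and>
                snd (blinfun_apply (F' z) 1) + fst (blinfun_apply (F' z) \<i>) = 0))"

definition stem_mult :: "('a::real_vector \<Rightarrow> 'a \<Rightarrow> 'a) \<Rightarrow> (complex \<Rightarrow> 'a \<times> 'a) \<Rightarrow> (complex \<Rightarrow> 'a \<times> 'a)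
    \<Rightarrow> complex \<Rightarrow> 'a \<times> 'a" where
  "stem_mult mul F G z =
     (mul (fst (F z)) (fst (G z)) - mul (snd (F z)) (snd (G z)),
      mul (fst (F z)) (snd (G z)) + mul (snd (F z)) (fst (G z)))"

definition stem_cj :: "('a \<Rightarrow> 'a) \<Rightarrow> (complex \<Rightarrow> 'a \<times> 'a) \<Rightarrow> complex \<Rightarrow> 'a \<times> 'a" where
  "stem_cj cj F z = (cj (fst (F z)), cj (snd (F z)))"

definition stem_N :: "('a::real_vector \<Rightarrow> 'a \<Rightarrow> 'a) \<Rightarrow> ('a \<Rightarrow> 'a) \<Rightarrow> (complex \<Rightarrow> 'a \<times> 'a) \<Rightarrow> complex \<Rightarrow> 'a \<times> 'a" where
  "stem_N mul cj F = stem_mult mul F (stem_cj cj F)"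

definition slice_preserving_stem :: "'a::real_vector \<Rightarrow> complex set \<Rightarrow> (complex \<Rightarrow> 'a \<times> 'a) \<Rightarrow> bool" where
  "slice_preserving_stem one D F \<longleftrightarrow> (\<forall>z\<in>D. fst (F z) \<in> reals_in one \<and> snd (F z) \<in> reals_in one)"

definition tame_stem :: "('a::real_vector \<Rightarrow> 'a \<Rightarrow> 'a) \<Rightarrow> 'a \<Rightarrow> ('a \<Rightarrow> 'a) \<Rightarrow> complex set
    \<Rightarrow> (complex \<Rightarrow> 'a \<times> 'a) \<Rightarrow> bool" where
  "tame_stem mul one cj D F \<longleftrightarrow>
     slice_preserving_stem one D (stem_N mul cj F) \<and>
     (\<forall>x \<in> OmegaD mul one cj D.
        induced mul one cj D (stem_N mul cj F) x = induced mul one cj D (stem_N mul cj (stem_cj cj F)) x)"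

definition zeros_on :: "'a set \<Rightarrow> ('a \<Rightarrow> 'a::zero) \<Rightarrow> 'a set" where
  "zeros_on \<Omega> h = {x \<in> \<Omega>. h x = 0}"

definition sph_deriv :: "('a::real_vector \<Rightarrow> 'a \<Rightarrow> 'a) \<Rightarrow> 'a \<Rightarrow> ('a \<Rightarrow> 'a) \<Rightarrow> ('a \<Rightarrow> 'a) \<Rightarrow> 'a \<Rightarrow> 'a" where
  "sph_deriv mul one cj f x = (1/2) *\<^sub>R mul (ainv mul one (imp cj x)) (f x - f (cj x))"

end

(*
  Fix z in D and write F(z) = a + ib.  Then I(F) vanishes somewhere on the sphere over z iff
  a + J b = 0 for some J in S_A.  When b lies in C_A (f'_s = b / beta at alpha + beta J) and the norm
  N(F)(z) = F(z) F(z)^c lies in R + iR, as tameness guarantees, this happens iff N(F)(z) = 0.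
  In an alternative algebra the Moufang identities make the norm multiplicative on elements
  whose norm is a central unit, and a tame value a + ib with vanishing norm is the limit, as
  l -> 1, of a + i l b, whose norm (1 - l^2) n(b) is a central unit.  Hence N(FG) = N(F) N(G)
  pointwise, and a product of complex numbers vanishes iff a factor does.  On the real axis
  b = 0, and nonsingularity together with tameness makes a invertible.
*)

theory Submission
  imports Defs
begin

lemma add_self_cancel:
  fixes x y :: "'a::real_vector"
  shows "x + x = y + y \<Longrightarrow> x = y"
  by (metis scaleR_2 scaleR_cancel_left zero_neq_numeral)

lemma eq_uminus_self_iff:
  fixes x :: "'a::real_vector"
  shows "x = - x \<longleftrightarrow> x = 0"
  by (metis add.inverse_neutral add_self_cancel eq_neg_iff_add_eq_0)

section \<open>Alternative algebras\<close>

locale alt_algebra =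
  fixes mul :: "'a::real_vector \<Rightarrow> 'a \<Rightarrow> 'a" (infixl "\<star>" 70)
    and one :: 'a
  assumes mul_add_left: "(x + y) \<star> z = x \<star> z + y \<star> z"
    and mul_add_right: "x \<star> (y + z) = x \<star> y + x \<star> z"
    and mul_scaleR_left: "(c *\<^sub>R x) \<star> y = c *\<^sub>R (x \<star> y)"
    and mul_scaleR_right: "x \<star> (c *\<^sub>R y) = c *\<^sub>R (x \<star> y)"
    and mul_one_left: "one \<star> x = x"
    and mul_one_right: "x \<star> one = x"
    and assoc_left_alternative: "assoc mul x x y = 0"
    and assoc_right_alternative: "assoc mul y x x = 0"
begin

lemma mul_zero_left [simp]: "0 \<star> x = 0"
  using mul_scaleR_left[of 0 x x] by simp

lemma mul_zero_right [simp]: "x \<star> 0 = 0"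
  using mul_scaleR_right[of x 0 x] by simp

lemma mul_minus_left: "(- x) \<star> y = - (x \<star> y)"
  using mul_scaleR_left[of "-1" x y] by simp

lemma mul_minus_right: "x \<star> (- y) = - (x \<star> y)"
  using mul_scaleR_right[of x "-1" y] by simp

lemma mul_diff_left: "(x - y) \<star> z = x \<star> z - y \<star> z"
  using mul_add_left[of x "- y" z] mul_minus_left[of y z] by simp

lemma mul_diff_right: "x \<star> (y - z) = x \<star> y - x \<star> z"
  using mul_add_right[of x y "- z"] mul_minus_right[of x z] by simp

lemmas mul_simps = mul_add_left mul_add_right mul_scaleR_left mul_scaleR_right
  mul_minus_left mul_minus_right mul_diff_left mul_diff_right mul_one_left mul_one_right

lemma assoc_add:
  "assoc mul (x + y) z w = assoc mul x z w + assoc mul y z w"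
  "assoc mul z (x + y) w = assoc mul z x w + assoc mul z y w"
  "assoc mul z w (x + y) = assoc mul z w x + assoc mul z w y"
  by (simp_all add: assoc_def mul_simps)

lemma assoc_scaleR_left: "assoc mul (c *\<^sub>R x) y z = c *\<^sub>R assoc mul x y z"
  by (simp add: assoc_def mul_simps scaleR_diff_right)

lemma assoc_swap_left: "assoc mul x y z = - assoc mul y x z"
proof -
  have "assoc mul x y z + assoc mul y x z = 0"
    using assoc_left_alternative[of "x + y" z] unfolding assoc_add
    by (simp add: assoc_left_alternative add.commute)
  then show ?thesis by (simp add: eq_neg_iff_add_eq_0)
qed

lemma assoc_swap_right: "assoc mul x y z = - assoc mul x z y"
proof -
  have "assoc mul x y z + assoc mul x z y = 0"
    using assoc_right_alternative[of x "y + z"] unfolding assoc_add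
    by (simp add: assoc_right_alternative add.commute)
  then show ?thesis by (simp add: eq_neg_iff_add_eq_0)
qed

lemma assoc_flexible: "assoc mul x y x = 0"
  using assoc_swap_right[of x y x] assoc_left_alternative[of x y] by simp

lemma assoc_rotate: "assoc mul x y z = assoc mul y z x"
  using assoc_swap_left[of x y z] assoc_swap_right[of y x z] by simp

lemma teichmueller_identity:
  "assoc mul (w \<star> x) y z - assoc mul w (x \<star> y) z + assoc mul w x (y \<star> z)
     = w \<star> assoc mul x y z + assoc mul w x y \<star> z"
  by (simp add: assoc_def mul_simps)

text \<open>Three instances of the Teichmueller identity, in which alternativity kills all but
  three associators, form a linear system for them.\<close>
lemma assoc_mul_right_twice: "assoc mul a b (b \<star> c) = assoc mul a b c \<star> b"
proof -
  have e1: "assoc mul a b (b \<star> c) + assoc mul (a \<star> b) b c = assoc mul a (b \<star> b) c"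
    using teichmueller_identity[of a b b c]
    by (simp add: assoc_left_alternative assoc_right_alternative algebra_simps)
  have e2: "assoc mul a b (b \<star> c) + assoc mul a b (c \<star> b)
      = assoc mul (a \<star> b) b c + assoc mul a b c \<star> b"
    using teichmueller_identity[of a b c b]
      assoc_swap_right[of "a \<star> b" c b] assoc_swap_right[of a "b \<star> c" b] assoc_flexible[of b c]
    by (simp add: algebra_simps)
  have e3: "assoc mul a b (c \<star> b) + assoc mul a b c \<star> b = assoc mul a (b \<star> b) c"
    using teichmueller_identity[of a c b b] assoc_swap_right[of a "c \<star> b" b]
      assoc_swap_right[of a c "b \<star> b"] assoc_swap_right[of a c b]
      assoc_right_alternative[of "a \<star> c" b] assoc_right_alternative[of c b]
    by (simp add: mul_minus_left algebra_simps)
  have solve: "p + p = t + t" if "p + q = r" "p + s = q + t" "s + t = r" for p q r s t :: 'a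
  proof -
    have "s = r - t" using that(3) by (simp add: eq_diff_eq)
    have "p + p = (p + q) + (p + s) - q - s" by (simp add: algebra_simps)
    also have "\<dots> = r + (q + t) - q - (r - t)" using that(1,2) \<open>s = r - t\<close> by simp
    also have "\<dots> = t + t" by (simp add: algebra_simps)
    finally show ?thesis .
  qed
  from solve[OF e1 e2 e3] show ?thesis by (rule add_self_cancel)
qed

lemma moufang_left: "((x \<star> y) \<star> x) \<star> z = x \<star> (y \<star> (x \<star> z))"
proof -
  have "((x \<star> y) \<star> x) \<star> z - x \<star> (y \<star> (x \<star> z)) = assoc mul (x \<star> y) x z + assoc mul x y (x \<star> z)"
    by (simp add: assoc_def mul_simps)
  also have "assoc mul x y (x \<star> z) = assoc mul x y z \<star> x"
    using assoc_mul_right_twice[of y x z] assoc_swap_left[of y x z] assoc_swap_left[of y x "x \<star> z"]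
    by (simp add: mul_minus_left)
  also have "assoc mul (x \<star> y) x z = - (assoc mul x y z \<star> x)"
    using assoc_mul_right_twice[of z x y] assoc_swap_left[of "x \<star> y" x z]
      assoc_rotate[of x "x \<star> y" z] assoc_rotate[of "x \<star> y" z x] assoc_rotate[of z x y]
      assoc_rotate[of x y z]
    by simp
  finally show ?thesis by simp
qed

end

lemma alt_algebra_opposite: "alt_algebra mul one \<Longrightarrow> alt_algebra (\<lambda>x y. mul y x) one"
  unfolding alt_algebra_def assoc_def by (simp add: eq_neg_iff_add_eq_0)

context alt_algebra
begin

lemma assoc_opposite: "assoc (\<lambda>x y. y \<star> x) x y z = - assoc mul z y x"
  by (simp add: assoc_def)

lemma assoc_mul_left_twice: "assoc mul (c \<star> b) b a = b \<star> assoc mul c b a"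
proof -
  interpret opposite: alt_algebra "\<lambda>x y. y \<star> x" one
    by (rule alt_algebra_opposite[OF alt_algebra_axioms])
  from opposite.assoc_mul_right_twice[of a b c] show ?thesis
    by (simp add: assoc_opposite mul_minus_right)
qed

lemma moufang_middle: "(a \<star> b) \<star> (c \<star> a) = (a \<star> (b \<star> c)) \<star> a"
proof -
  have "(a \<star> b) \<star> (c \<star> a) - (a \<star> (b \<star> c)) \<star> a
      = assoc mul a b (c \<star> a) - a \<star> assoc mul b c a - assoc mul a (b \<star> c) a"
    by (simp add: assoc_def mul_simps)
  also have "assoc mul a b (c \<star> a) = a \<star> assoc mul a b c"
    using assoc_mul_left_twice[of c a b] assoc_rotate[of a b "c \<star> a"]
      assoc_rotate[of b "c \<star> a" a] assoc_rotate[of c a b]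
    by simp
  also have "assoc mul b c a = assoc mul a b c"
    using assoc_rotate[of a b c] by simp
  finally show ?thesis by (simp add: assoc_flexible)
qed

text \<open>From Moufang, both \<open>L\<^sub>x L\<^sub>y\<close> and \<open>L\<^sub>y L\<^sub>x\<close> are
  idempotent, while left alternativity gives \<open>L\<^sub>x L\<^sub>y + L\<^sub>y L\<^sub>x = 2\<close>.\<close>
lemma inverse_cancel_left:
  assumes xy: "x \<star> y = one" and yx: "y \<star> x = one"
  shows "y \<star> (x \<star> w) = w" "x \<star> (y \<star> w) = w"
proof -
  have sum: "x \<star> (y \<star> v) + y \<star> (x \<star> v) = v + v" for v
  proof -
    have "assoc mul x y v + assoc mul y x v = 0"
      using assoc_swap_left[of x y v] by simp
    then have "v - x \<star> (y \<star> v) + (v - y \<star> (x \<star> v)) = 0"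
      using xy yx by (simp only: assoc_def mul_one_left)
    then show ?thesis by (simp add: algebra_simps)
  qed
  have idem_xy: "x \<star> (y \<star> (x \<star> (y \<star> v))) = x \<star> (y \<star> v)" for v
    using moufang_left[of x y "y \<star> v"] xy by (simp add: mul_one_left)
  have idem_yx: "y \<star> (x \<star> (y \<star> (x \<star> v))) = y \<star> (x \<star> v)" for v
    using moufang_left[of y x "x \<star> v"] yx by (simp add: mul_one_left)
  define e where "e = x \<star> (y \<star> w)"
  define f where "f = y \<star> (x \<star> w)"
  have f_eq: "f = w + w - e"
    using sum[of w] unfolding e_def f_def by (simp add: algebra_simps)
  have "x \<star> (y \<star> e) = e" "y \<star> (x \<star> f) = f"
    unfolding e_def f_def by (rule idem_xy, rule idem_yx)
  moreover have "x \<star> (y \<star> f) = e + e - x \<star> (y \<star> e)"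
    unfolding f_eq by (simp add: mul_simps e_def)
  ultimately have "y \<star> (x \<star> f) = f + f - e" "y \<star> (x \<star> f) = f"
    using sum[of f] by (simp_all add: algebra_simps)
  then have "f = e" by (simp add: algebra_simps)
  then have "e + e = w + w"
    using sum[of w] by (simp add: e_def f_def)
  then have "e = w" by (rule add_self_cancel)
  with \<open>f = e\<close> show "y \<star> (x \<star> w) = w" "x \<star> (y \<star> w) = w"
    unfolding e_def f_def by simp_all
qed

lemma inverse_cancel_right:
  assumes xy: "x \<star> y = one" and yx: "y \<star> x = one"
  shows "(w \<star> x) \<star> y = w" "(w \<star> y) \<star> x = w"
proof -
  interpret opposite: alt_algebra "\<lambda>x y. y \<star> x" one
    by (rule alt_algebra_opposite[OF alt_algebra_axioms])
  show "(w \<star> x) \<star> y = w" "(w \<star> y) \<star> x = w"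
    using opposite.inverse_cancel_left[of y x w] xy yx by simp_all
qed

lemma inverse_mul:
  assumes "x \<star> x' = one" "x' \<star> x = one" "y \<star> y' = one" "y' \<star> y = one"
  shows "(x \<star> y) \<star> (y' \<star> x') = one"
proof -
  define c where "c = (y' \<star> x') \<star> x'"
  have "c \<star> x = y' \<star> x'"
    unfolding c_def using inverse_cancel_right(2)[of x x'] assms by simp
  moreover have "y \<star> c = x' \<star> x'"
  proof -
    have "c = y' \<star> (x' \<star> x')"
      using assoc_right_alternative[of y' x'] unfolding c_def assoc_def by simp
    then show ?thesis using inverse_cancel_left(2)[of y y'] assms by simp
  qed
  moreover have "x \<star> (x' \<star> x') = x'"
    using inverse_cancel_left(2)[of x x'] assms by simp
  ultimately show ?thesis
    using moufang_middle[of x y c] assms by simp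
qed

lemma center_assoc:
  assumes "r \<in> center mul"
  shows "assoc mul r a b = 0" "assoc mul a r b = 0" "assoc mul a b r = 0" "r \<star> a = a \<star> r"
  using assms assoc_swap_left[of a r b] assoc_rotate[of r a b] by (auto simp: center_def)

lemma center_mul_assoc:
  assumes "r \<in> center mul"
  shows "(r \<star> x) \<star> y = r \<star> (x \<star> y)" "x \<star> (r \<star> y) = r \<star> (x \<star> y)"
    "(x \<star> r) \<star> y = r \<star> (x \<star> y)" "x \<star> (y \<star> r) = r \<star> (x \<star> y)"
proof -
  show rxy: "(r \<star> x) \<star> y = r \<star> (x \<star> y)"
    using center_assoc(1)[OF assms, of x y] by (simp add: assoc_def)
  have "(x \<star> r) \<star> y = x \<star> (r \<star> y)"
    using center_assoc(2)[OF assms, of x y] by (simp add: assoc_def)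
  moreover show xry: "(x \<star> r) \<star> y = r \<star> (x \<star> y)"
    using center_assoc(4)[OF assms, of x] rxy by metis
  ultimately show "x \<star> (r \<star> y) = r \<star> (x \<star> y)" by simp
  then show "x \<star> (y \<star> r) = r \<star> (x \<star> y)"
    using center_assoc(4)[OF assms, of y] by metis
qed

lemma center_mul_closed:
  assumes "r \<in> center mul" "s \<in> center mul"
  shows "r \<star> s \<in> center mul"
proof -
  have "assoc mul (r \<star> s) a b = 0" for a b
    by (simp only: assoc_def center_mul_assoc(1)[OF assms(1)] center_mul_assoc(1)[OF assms(2)] diff_self)
  moreover have "(r \<star> s) \<star> a = a \<star> (r \<star> s)" for a
    by (simp only: center_mul_assoc(1,2)[OF assms(1)] center_assoc(4)[OF assms(2), of a])
  ultimately show ?thesis by (simp add: center_def)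
qed

lemma center_scaleR_closed: "r \<in> center mul \<Longrightarrow> c *\<^sub>R r \<in> center mul"
  by (simp add: center_def assoc_scaleR_left mul_scaleR_left mul_scaleR_right)

lemma center_reals: "c *\<^sub>R one \<in> center mul"
proof -
  have "one \<in> center mul"
    by (simp add: center_def assoc_def mul_one_left mul_one_right)
  then show ?thesis by (rule center_scaleR_closed)
qed

lemma center_cancel:
  assumes "r \<in> center mul" "\<rho> \<star> r = one" "r \<star> w = 0"
  shows "w = 0"
proof -
  have "\<rho> \<star> (r \<star> w) = (\<rho> \<star> r) \<star> w"
    using center_assoc(2)[OF assms(1), of \<rho> w] by (simp add: assoc_def)
  then show ?thesis using assms by (simp add: mul_one_left)
qed

lemma center_inverse:
  assumes r: "r \<in> center mul" and inv: "r \<star> \<rho> = one" "\<rho> \<star> r = one"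
  shows "\<rho> \<in> center mul"
proof -
  have cancel: "r \<star> (\<rho> \<star> a) = a" for a
    using center_mul_assoc(1)[OF r, of \<rho> a] inv(1) mul_one_left by metis
  have "\<rho> \<star> a = a \<star> \<rho>" for a
  proof -
    have "r \<star> (a \<star> \<rho>) = a"
      using center_mul_assoc(4)[OF r, of a \<rho>] inv(2) mul_one_right by metis
    then have "r \<star> (\<rho> \<star> a - a \<star> \<rho>) = 0"
      using cancel[of a] by (simp add: mul_diff_right)
    then have "\<rho> \<star> a - a \<star> \<rho> = 0"
      by (rule center_cancel[OF r inv(2)])
    then show ?thesis by simp
  qed
  moreover have "assoc mul \<rho> a b = 0" for a b
  proof -
    have "r \<star> ((\<rho> \<star> a) \<star> b) = a \<star> b"
      using center_mul_assoc(1)[OF r, of "\<rho> \<star> a" b] cancel[of a] by metis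
    then have "r \<star> assoc mul \<rho> a b = 0"
      using cancel[of "a \<star> b"] by (simp add: assoc_def mul_diff_right)
    then show ?thesis by (rule center_cancel[OF r inv(2)])
  qed
  ultimately show ?thesis by (simp add: center_def)
qed

lemma center_unit_mul_cancel:
  assumes r: "r \<in> center mul" and "invertible_el mul one r"
  shows "r \<star> v = r \<star> w \<longleftrightarrow> v = w"
proof
  obtain \<rho> where "\<rho> \<star> r = one" using assms(2) by (auto simp: invertible_el_def)
  assume "r \<star> v = r \<star> w"
  then have "r \<star> (v - w) = 0" by (simp add: mul_diff_right)
  then have "v - w = 0" by (rule center_cancel[OF r \<open>\<rho> \<star> r = one\<close>])
  then show "v = w" by simp
qed simp

lemma center_unit_mul_center:
  assumes r: "r \<in> center mul" and "invertible_el mul one r" and "r \<star> w \<in> center mul"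
  shows "w \<in> center mul"
proof -
  obtain \<rho> where \<rho>: "r \<star> \<rho> = one" "\<rho> \<star> r = one" using assms(2) by (auto simp: invertible_el_def)
  have "w = \<rho> \<star> (r \<star> w)"
    using center_mul_assoc(2,3)[OF r, of \<rho> w] \<rho>(2) mul_one_left by metis
  then show ?thesis
    using center_mul_closed[OF center_inverse[OF r \<rho>] assms(3)] by simp
qed

end

section \<open>Alternative algebras with involution\<close>

definition central_unit_norm :: "('a::real_vector \<Rightarrow> 'a \<Rightarrow> 'a) \<Rightarrow> 'a \<Rightarrow> ('a \<Rightarrow> 'a) \<Rightarrow> 'a \<Rightarrow> bool" where
  "central_unit_norm mul one cj x \<longleftrightarrow>
     nrm mul cj (cj x) = nrm mul cj x \<and> nrm mul cj x \<in> center mul \<and> invertible_el mul one (nrm mul cj x)"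

locale alt_star_algebra = alt_algebra mul one
  for mul :: "'a::real_vector \<Rightarrow> 'a \<Rightarrow> 'a" (infixl "\<star>" 70) and one +
  fixes cj :: "'a \<Rightarrow> 'a"
  assumes cj_add: "cj (x + y) = cj x + cj y"
    and cj_scaleR: "cj (c *\<^sub>R x) = c *\<^sub>R cj x"
    and cj_cj: "cj (cj x) = x"
    and cj_mul: "cj (x \<star> y) = cj y \<star> cj x"
    and cj_one: "cj one = one"
begin

lemma cj_zero [simp]: "cj 0 = 0"
  using cj_scaleR[of 0 0] by simp

lemma cj_minus: "cj (- x) = - cj x"
  using cj_scaleR[of "-1" x] by simp

lemma cj_diff: "cj (x - y) = cj x - cj y"
  using cj_add[of x "- y"] cj_minus[of y] by simp

lemma central_unit_norm_inverse:
  assumes "central_unit_norm mul one cj x"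
  obtains x' where "x \<star> x' = one" "x' \<star> x = one" "cj x = nrm mul cj x \<star> x'"
proof -
  define r where "r = nrm mul cj x"
  have r: "r \<in> center mul" "cj x \<star> x = r" "x \<star> cj x = r"
    using assms by (simp_all add: central_unit_norm_def r_def nrm_def cj_cj)
  obtain \<rho> where \<rho>: "r \<star> \<rho> = one" "\<rho> \<star> r = one"
    using assms by (auto simp: central_unit_norm_def invertible_el_def r_def)
  have \<rho>_center: "\<rho> \<in> center mul" by (rule center_inverse[OF r(1) \<rho>])
  show ?thesis
  proof
    show "x \<star> (\<rho> \<star> cj x) = one" "(\<rho> \<star> cj x) \<star> x = one"
      using center_mul_assoc(2)[OF \<rho>_center, of x "cj x"] center_mul_assoc(1)[OF \<rho>_center, of "cj x" x]
        \<rho>(2) r(2,3) by simp_all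
    show "cj x = nrm mul cj x \<star> (\<rho> \<star> cj x)"
      using center_mul_assoc(1)[OF r(1), of \<rho> "cj x"] \<rho>(1) by (simp add: mul_one_left r_def)
  qed
qed

lemma nrm_mul_central_unit:
  assumes X: "central_unit_norm mul one cj X" and Y: "central_unit_norm mul one cj Y"
  shows "nrm mul cj (X \<star> Y) = nrm mul cj X \<star> nrm mul cj Y"
proof -
  define s t where "s = nrm mul cj X" and "t = nrm mul cj Y"
  have s: "s \<in> center mul" and t: "t \<in> center mul"
    using X Y by (simp_all add: central_unit_norm_def s_def t_def)
  obtain X' where X': "X \<star> X' = one" "X' \<star> X = one" "cj X = s \<star> X'"
    using central_unit_norm_inverse[OF X] unfolding s_def by blast
  obtain Y' where Y': "Y \<star> Y' = one" "Y' \<star> Y = one" "cj Y = t \<star> Y'"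
    using central_unit_norm_inverse[OF Y] unfolding t_def by blast
  have "cj (X \<star> Y) = (t \<star> Y') \<star> (s \<star> X')"
    by (simp only: cj_mul X'(3) Y'(3))
  also have "\<dots> = t \<star> (Y' \<star> (s \<star> X'))" by (rule center_mul_assoc(1)[OF t])
  also have "Y' \<star> (s \<star> X') = s \<star> (Y' \<star> X')" by (rule center_mul_assoc(2)[OF s])
  finally have cj_XY: "cj (X \<star> Y) = t \<star> (s \<star> (Y' \<star> X'))" .
  have "nrm mul cj (X \<star> Y) = t \<star> ((X \<star> Y) \<star> (s \<star> (Y' \<star> X')))"
    unfolding nrm_def cj_XY by (rule center_mul_assoc(2)[OF t])
  also have "(X \<star> Y) \<star> (s \<star> (Y' \<star> X')) = s \<star> ((X \<star> Y) \<star> (Y' \<star> X'))"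
    by (rule center_mul_assoc(2)[OF s])
  also have "(X \<star> Y) \<star> (Y' \<star> X') = one" by (rule inverse_mul[OF X'(1,2) Y'(1,2)])
  also have "t \<star> (s \<star> one) = s \<star> t"
    using center_assoc(4)[OF t, of s] by (simp add: mul_one_right)
  finally show ?thesis unfolding s_def t_def .
qed

lemma CA_nrm_cj:
  assumes "y \<in> CA mul one cj"
  shows "nrm mul cj (cj y) = nrm mul cj y"
proof (cases "y = 0")
  case False
  define r s where "r = y \<star> cj y" and "s = cj y \<star> y"
  have r: "r \<in> center mul" "invertible_el mul one r" and s: "s \<in> center mul"
    using assms False by (auto simp: CA_def nrm_def r_def s_def cj_cj)
  have "r \<star> y = s \<star> y"
    using assoc_flexible[of y "cj y"] center_assoc(4)[OF s, of y] by (simp add: assoc_def r_def s_def)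
  then have "r \<star> r = r \<star> s"
    using center_mul_assoc(1)[OF r(1), of y "cj y"] center_mul_assoc(1)[OF s, of y "cj y"]
      center_assoc(4)[OF s, of r] by (simp add: r_def)
  then show ?thesis
    using center_unit_mul_cancel[OF r] by (simp add: r_def s_def nrm_def cj_cj)
qed simp

lemma CA_central_unit_norm:
  "y \<in> CA mul one cj \<Longrightarrow> y \<noteq> 0 \<Longrightarrow> central_unit_norm mul one cj y"
  using CA_nrm_cj[of y] unfolding CA_def central_unit_norm_def by blast

lemma CA_scaleR_cancel:
  assumes c: "c \<noteq> 0" and cb: "c *\<^sub>R b \<in> CA mul one cj"
  shows "b \<in> CA mul one cj"
proof -
  have nrm_scaleR: "nrm mul cj (c *\<^sub>R x) = (c * c) *\<^sub>R nrm mul cj x" for x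
    by (simp add: nrm_def cj_scaleR mul_scaleR_left mul_scaleR_right)
  have invertible: "invertible_el mul one w" if scaled: "invertible_el mul one ((c * c) *\<^sub>R w)" for w
  proof -
    obtain s where "((c * c) *\<^sub>R w) \<star> s = one" "s \<star> ((c * c) *\<^sub>R w) = one"
      using scaled unfolding invertible_el_def by blast
    then have "w \<star> ((c * c) *\<^sub>R s) = one" "((c * c) *\<^sub>R s) \<star> w = one"
      by (simp_all add: mul_scaleR_left mul_scaleR_right)
    then show ?thesis unfolding invertible_el_def by blast
  qed
  have central: "w \<in> center mul" if "(c * c) *\<^sub>R w \<in> center mul" for w
    using center_scaleR_closed[OF that, of "1 / (c * c)"] c by simp
  show ?thesis
  proof (cases "b = 0")
    case False
    then have "c *\<^sub>R b \<noteq> 0" using c by simp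
    then have "nrm mul cj (c *\<^sub>R b) \<in> center mul" "invertible_el mul one (nrm mul cj (c *\<^sub>R b))"
      "nrm mul cj (c *\<^sub>R cj b) \<in> center mul" "invertible_el mul one (nrm mul cj (c *\<^sub>R cj b))"
      using cb cj_scaleR[of c b] unfolding CA_def by auto
    then have "nrm mul cj b \<in> center mul" "invertible_el mul one (nrm mul cj b)"
      "nrm mul cj (cj b) \<in> center mul" "invertible_el mul one (nrm mul cj (cj b))"
      unfolding nrm_scaleR by (auto intro: invertible central)
    then show ?thesis by (simp add: CA_def)
  qed (simp add: CA_def)
qed

lemma cj_nrm: "cj (nrm mul cj x) = nrm mul cj x"
  by (simp add: nrm_def cj_mul cj_cj)

lemma SA_cj: "J \<in> SA mul one cj \<Longrightarrow> cj J = - J"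
  by (simp add: SA_def tr_def eq_neg_iff_add_eq_0 add.commute)

lemma
  assumes J: "J \<in> SA mul one cj"
  shows SA_mul_self: "J \<star> J = - one"
    and SA_mul_mul: "J \<star> (J \<star> w) = - w"
    and SA_uminus: "- J \<in> SA mul one cj"
proof -
  have cj: "cj J = - J" using SA_cj[OF J] .
  show JJ: "J \<star> J = - one"
    using J cj by (simp add: SA_def nrm_def mul_minus_right minus_equation_iff)
  show "J \<star> (J \<star> w) = - w"
    using assoc_left_alternative[of J w] JJ by (simp add: assoc_def mul_minus_left mul_one_left)
  show "- J \<in> SA mul one cj"
    using J cj by (simp add: SA_def tr_def nrm_def cj_minus mul_minus_left mul_minus_right)
qed

lemma mul_cj_central_unit:
  assumes "central_unit_norm mul one cj y"
  shows "(u \<star> y) \<star> cj y = nrm mul cj y \<star> u"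
proof -
  obtain y' where y': "y \<star> y' = one" "y' \<star> y = one" "cj y = nrm mul cj y \<star> y'"
    using central_unit_norm_inverse[OF assms] by blast
  have r: "nrm mul cj y \<in> center mul"
    using assms by (simp add: central_unit_norm_def)
  have "(u \<star> y) \<star> cj y = nrm mul cj y \<star> ((u \<star> y) \<star> y')"
    unfolding y'(3) by (rule center_mul_assoc(2)[OF r])
  then show ?thesis
    using inverse_cancel_right(1)[OF y'(1,2)] by simp
qed

lemma nrm_mul_central_trace:
  assumes y: "central_unit_norm mul one cj y" and t: "u + cj u \<in> center mul"
  shows "nrm mul cj (u \<star> y) = nrm mul cj y \<star> nrm mul cj u"
proof -
  define r t where "r = nrm mul cj y" and "t = u + cj u"
  have r: "r \<in> center mul" and t: "t \<in> center mul"
    using y t by (simp_all add: central_unit_norm_def r_def t_def)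
  have "nrm mul cj (u \<star> y) = (u \<star> y) \<star> (cj y \<star> t) - (u \<star> y) \<star> (cj y \<star> u)"
    by (simp add: nrm_def cj_mul t_def mul_diff_right mul_add_right)
  also have "(u \<star> y) \<star> (cj y \<star> t) = t \<star> (r \<star> u)"
    using center_mul_assoc(4)[OF t, of "u \<star> y" "cj y"] mul_cj_central_unit[OF y]
    by (simp add: r_def)
  also have "(u \<star> y) \<star> (cj y \<star> u) = r \<star> (u \<star> u)"
    using moufang_middle[of u y "cj y"] center_mul_assoc(3)[OF r, of u u]
    by (simp add: r_def nrm_def)
  also have "t \<star> (r \<star> u) = r \<star> (u \<star> t)"
    using center_mul_assoc(2)[OF r, of t u] center_assoc(4)[OF t, of u] by simp
  also have "r \<star> (u \<star> t) - r \<star> (u \<star> u) = r \<star> nrm mul cj u"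
    by (simp add: t_def nrm_def mul_add_right mul_diff_right)
  finally show ?thesis unfolding r_def .
qed

lemma zero_on_sphere_iff_quotient:
  assumes y: "y \<star> y' = one" "y' \<star> y = one"
  shows "(\<exists>J\<in>SA mul one cj. x + J \<star> y = 0) \<longleftrightarrow> - (x \<star> y') \<in> SA mul one cj"
proof -
  have "x + J \<star> y = 0 \<longleftrightarrow> J = - (x \<star> y')" for J
  proof -
    have "x + J \<star> y = 0 \<longleftrightarrow> ((x \<star> y') + J) \<star> y = 0"
      by (simp add: mul_add_left inverse_cancel_right(2)[OF y])
    also have "\<dots> \<longleftrightarrow> (x \<star> y') + J = 0"
      using inverse_cancel_right(1)[OF y, of "x \<star> y' + J"] by auto
    finally show ?thesis by (auto simp: eq_neg_iff_add_eq_0 add.commute)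
  qed
  then show ?thesis by auto
qed

text \<open>Writing \<open>x = u y\<close>, the only candidate is \<open>J = -u\<close>, and the norm and trace of \<open>x\<close> relative
  to \<open>y\<close> are those of \<open>u\<close> multiplied by the central unit \<open>n(y)\<close>.\<close>
lemma zero_on_sphere_iff_central_unit:
  assumes y: "central_unit_norm mul one cj y" and trace: "x \<star> cj y + y \<star> cj x \<in> center mul"
  shows "(\<exists>J\<in>SA mul one cj. x + J \<star> y = 0) \<longleftrightarrow>
    nrm mul cj x = nrm mul cj y \<and> x \<star> cj y + y \<star> cj x = 0"
proof -
  define r where "r = nrm mul cj y"
  have r: "r \<in> center mul" "invertible_el mul one r"
    using y by (simp_all add: central_unit_norm_def r_def)
  obtain y' where y': "y \<star> y' = one" "y' \<star> y = one" "cj y = r \<star> y'"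
    using central_unit_norm_inverse[OF y] unfolding r_def by blast
  define u where "u = x \<star> y'"
  have x: "x = u \<star> y"
    unfolding u_def using inverse_cancel_right(2)[OF y'(1,2)] by simp
  have zero_iff: "(\<exists>J\<in>SA mul one cj. x + J \<star> y = 0) \<longleftrightarrow> - u \<in> SA mul one cj"
    unfolding u_def by (rule zero_on_sphere_iff_quotient[OF y'(1,2)])
  have x_cj_y: "x \<star> cj y = r \<star> u"
    unfolding x r_def by (rule mul_cj_central_unit[OF y])
  have "y \<star> cj x = cj (x \<star> cj y)" by (simp add: cj_mul cj_cj)
  also have "\<dots> = cj u \<star> r" by (simp add: x_cj_y cj_mul r_def cj_nrm)
  also have "\<dots> = r \<star> cj u" using center_assoc(4)[OF r(1), of "cj u"] by simp
  finally have trace_eq: "x \<star> cj y + y \<star> cj x = r \<star> (u + cj u)"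
    using x_cj_y by (simp add: mul_add_right)
  have "u + cj u \<in> center mul"
    using center_unit_mul_center[OF r] trace unfolding trace_eq .
  then have nrm_eq: "nrm mul cj x = r \<star> nrm mul cj u"
    unfolding x r_def by (rule nrm_mul_central_trace[OF y])
  have "tr cj (- u) = - (u + cj u)" "nrm mul cj (- u) = nrm mul cj u"
    by (simp_all add: tr_def nrm_def cj_minus mul_minus_left mul_minus_right)
  then have "- u \<in> SA mul one cj \<longleftrightarrow> u + cj u = 0 \<and> nrm mul cj u = one"
    by (simp only: SA_def mem_Collect_eq neg_equal_0_iff_equal)
  then show ?thesis
    using zero_iff center_unit_mul_cancel[OF r] trace_eq nrm_eq
    by (metis mul_one_right mul_zero_right r_def)
qed

lemma zero_on_sphere_iff_nrm:
  assumes ns: "nonsingular mul cj" and SA: "SA mul one cj \<noteq> {}"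
    and y: "y \<in> CA mul one cj" and trace: "x \<star> cj y + y \<star> cj x \<in> center mul"
  shows "(\<exists>J\<in>SA mul one cj. x + J \<star> y = 0) \<longleftrightarrow>
    nrm mul cj x = nrm mul cj y \<and> x \<star> cj y + y \<star> cj x = 0"
proof (cases "y = 0")
  case True
  have "nrm mul cj x = 0 \<longleftrightarrow> x = 0"
    using ns unfolding nonsingular_def nrm_def by (metis cj_zero mul_zero_left)
  moreover have "(\<exists>J\<in>SA mul one cj. x + J \<star> y = 0) \<longleftrightarrow> x = 0"
    using SA True by auto
  ultimately show ?thesis
    using True by (simp add: nrm_def)
next
  case False
  then show ?thesis
    using zero_on_sphere_iff_central_unit[OF CA_central_unit_norm[OF y] trace] by simp
qed

end

section \<open>The complexification\<close>

definition cmul :: "('a::real_vector \<Rightarrow> 'a \<Rightarrow> 'a) \<Rightarrow> 'a \<times> 'a \<Rightarrow> 'a \<times> 'a \<Rightarrow> 'a \<times> 'a" where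
  "cmul mul X Y =
     (mul (fst X) (fst Y) - mul (snd X) (snd Y), mul (fst X) (snd Y) + mul (snd X) (fst Y))"

definition ccj :: "('a \<Rightarrow> 'a) \<Rightarrow> 'a \<times> 'a \<Rightarrow> 'a \<times> 'a" where
  "ccj cj X = (cj (fst X), cj (snd X))"

lemma stem_mult_eq_cmul: "stem_mult mul F G = (\<lambda>z. cmul mul (F z) (G z))"
  by (simp add: fun_eq_iff stem_mult_def cmul_def)

lemma stem_cj_eq_ccj: "stem_cj cj F = (\<lambda>z. ccj cj (F z))"
  by (simp add: fun_eq_iff stem_cj_def ccj_def)

lemma stem_N_eq_nrm: "stem_N mul cj F = (\<lambda>z. nrm (cmul mul) (ccj cj) (F z))"
  by (simp add: stem_N_def stem_mult_eq_cmul stem_cj_eq_ccj nrm_def)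

lemma fst_nrm_cmul: "fst (nrm (cmul mul) (ccj cj) X) = nrm mul cj (fst X) - nrm mul cj (snd X)"
  by (simp add: nrm_def cmul_def ccj_def)

lemma snd_nrm_cmul:
  "snd (nrm (cmul mul) (ccj cj) X) = mul (fst X) (cj (snd X)) + mul (snd X) (cj (fst X))"
  by (simp add: nrm_def cmul_def ccj_def)

context alt_algebra
begin

lemma assoc_cmul: "assoc (cmul mul) X Y Z =
  (assoc mul (fst X) (fst Y) (fst Z) - assoc mul (snd X) (snd Y) (fst Z)
     - assoc mul (fst X) (snd Y) (snd Z) - assoc mul (snd X) (fst Y) (snd Z),
   assoc mul (fst X) (fst Y) (snd Z) - assoc mul (snd X) (snd Y) (snd Z)
     + assoc mul (fst X) (snd Y) (fst Z) + assoc mul (snd X) (fst Y) (fst Z))"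
  by (simp add: assoc_def cmul_def mul_simps algebra_simps)

lemma alt_algebra_cmul: "alt_algebra (cmul mul) (one, 0)"
proof
  fix x y z :: "'a \<times> 'a" and c :: real
  show "cmul mul (x + y) z = cmul mul x z + cmul mul y z"
    "cmul mul x (y + z) = cmul mul x y + cmul mul x z"
    "cmul mul (c *\<^sub>R x) y = c *\<^sub>R cmul mul x y"
    "cmul mul x (c *\<^sub>R y) = c *\<^sub>R cmul mul x y"
    "cmul mul (one, 0) x = x" "cmul mul x (one, 0) = x"
    by (simp_all add: cmul_def mul_simps algebra_simps)
  show "assoc (cmul mul) x x y = 0"
    unfolding assoc_cmul using assoc_swap_left[of "fst x" "snd x"]
    by (simp add: assoc_left_alternative prod_eq_iff)
  show "assoc (cmul mul) y x x = 0"
    unfolding assoc_cmul using assoc_swap_right[of "fst y" "snd x" "fst x"]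
      assoc_swap_right[of "snd y" "snd x" "fst x"]
    by (simp add: assoc_right_alternative prod_eq_iff)
qed

lemma center_cmul:
  "c\<^sub>1 \<in> center mul \<Longrightarrow> c\<^sub>2 \<in> center mul \<Longrightarrow> (c\<^sub>1, c\<^sub>2) \<in> center (cmul mul)"
  unfolding center_def by (simp add: assoc_cmul center_assoc cmul_def prod_eq_iff)

lemma cmul_reals:
  "cmul mul (a *\<^sub>R one, b *\<^sub>R one) (c *\<^sub>R one, d *\<^sub>R one)
     = ((a * c - b * d) *\<^sub>R one, (a * d + b * c) *\<^sub>R one)"
  by (simp add: cmul_def mul_scaleR_left mul_scaleR_right mul_one_left
      scaleR_diff_left scaleR_add_left mult.commute)

text \<open>On \<open>\<real> + \<i> \<real>\<close> the complexified product is that of \<open>\<complex>\<close>, which has no zero divisors.\<close>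
lemma cmul_reals_eq_0_iff:
  assumes "P \<in> reals_in one \<times> reals_in one" "Q \<in> reals_in one \<times> reals_in one"
  shows "cmul mul P Q = 0 \<longleftrightarrow> P = 0 \<or> Q = 0"
proof (cases "one = 0")
  case True
  then show ?thesis using assms by (auto simp: reals_in_def cmul_def zero_prod_def)
next
  case False
  obtain a b c d where P: "P = (a *\<^sub>R one, b *\<^sub>R one)" and Q: "Q = (c *\<^sub>R one, d *\<^sub>R one)"
    using assms by (auto simp: reals_in_def)
  have "cmul mul P Q = 0 \<longleftrightarrow> Complex a b * Complex c d = 0"
    using False by (simp add: P Q cmul_reals complex_eq_iff zero_prod_def)
  also have "\<dots> \<longleftrightarrow> Complex a b = 0 \<or> Complex c d = 0" by (rule mult_eq_0_iff)
  also have "\<dots> \<longleftrightarrow> P = 0 \<or> Q = 0"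
    using False by (simp add: P Q complex_eq_iff zero_prod_def)
  finally show ?thesis .
qed

end

context alt_star_algebra
begin

lemma alt_star_algebra_cmul: "alt_star_algebra (cmul mul) (one, 0) (ccj cj)"
proof -
  interpret C: alt_algebra "cmul mul" "(one, 0)" by (rule alt_algebra_cmul)
  show ?thesis
  proof
    fix x y :: "'a \<times> 'a" and c :: real
    show "ccj cj (x + y) = ccj cj x + ccj cj y" "ccj cj (c *\<^sub>R x) = c *\<^sub>R ccj cj x"
      "ccj cj (ccj cj x) = x" "ccj cj (one, 0) = (one, 0)"
      by (simp_all add: ccj_def cj_add cj_scaleR cj_cj cj_one)
    show "ccj cj (cmul mul x y) = cmul mul (ccj cj y) (ccj cj x)"
      by (simp add: ccj_def cmul_def cj_diff cj_add cj_mul add.commute)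
  qed
qed

lemma nrm_cmul_scaleR_snd:
  "nrm (cmul mul) (ccj cj) (a, l *\<^sub>R b)
     = (nrm mul cj a - (l * l) *\<^sub>R nrm mul cj b, l *\<^sub>R snd (nrm (cmul mul) (ccj cj) (a, b)))"
  by (simp add: nrm_def cmul_def ccj_def cj_scaleR mul_scaleR_left mul_scaleR_right scaleR_add_right)

lemma central_unit_norm_cmul_reals:
  assumes N: "nrm (cmul mul) (ccj cj) X = (a *\<^sub>R one, b *\<^sub>R one)" and ab: "(a, b) \<noteq> (0, 0)"
    and cj: "nrm (cmul mul) (ccj cj) (ccj cj X) = nrm (cmul mul) (ccj cj) X"
  shows "central_unit_norm (cmul mul) (one, 0) (ccj cj) X"
proof -
  define d where "d = a * a + b * b"
  have "d \<noteq> 0" using ab by (auto simp: d_def sum_squares_eq_zero_iff)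
  then have "a * (a / d) - b * (- b / d) = 1" "a * (- b / d) + b * (a / d) = 0"
    "a / d * a - (- b / d) * b = 1" "a / d * b + (- b / d) * a = 0"
    by (simp_all add: d_def diff_divide_distrib[symmetric] add_divide_distrib[symmetric])
  then have "cmul mul (a *\<^sub>R one, b *\<^sub>R one) ((a / d) *\<^sub>R one, (- b / d) *\<^sub>R one) = (one, 0)"
    "cmul mul ((a / d) *\<^sub>R one, (- b / d) *\<^sub>R one) (a *\<^sub>R one, b *\<^sub>R one) = (one, 0)"
    unfolding cmul_reals by simp_all
  then show ?thesis
    using N cj center_cmul[OF center_reals center_reals]
    unfolding central_unit_norm_def invertible_el_def by metis
qed

text \<open>The norm of \<open>(a, l b)\<close> is \<open>((1 - l\<^sup>2) n(b), 0)\<close>.\<close>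
lemma central_unit_norm_cmul_rescaled:
  assumes N: "nrm (cmul mul) (ccj cj) (a, b) = 0" and N_cj: "nrm (cmul mul) (ccj cj) (cj a, cj b) = 0"
    and b: "b \<in> CA mul one cj" "b \<noteq> 0" and l: "l * l \<noteq> 1"
  shows "central_unit_norm (cmul mul) (one, 0) (ccj cj) (a, l *\<^sub>R b)"
proof -
  define r where "r = nrm mul cj b"
  have r: "r \<in> center mul" "invertible_el mul one r"
    using CA_central_unit_norm[OF b] by (simp_all add: central_unit_norm_def r_def)
  obtain \<rho> where \<rho>: "r \<star> \<rho> = one" "\<rho> \<star> r = one"
    using r(2) by (auto simp: invertible_el_def)
  have "nrm mul cj a = r" "nrm mul cj (cj a) = r"
    using N N_cj nrm_cmul_scaleR_snd[of a 1 b] nrm_cmul_scaleR_snd[of "cj a" 1 "cj b"] CA_nrm_cj[OF b(1)]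
    by (simp_all add: zero_prod_def r_def)
  then have "nrm (cmul mul) (ccj cj) (a, l *\<^sub>R b) = ((1 - l * l) *\<^sub>R r, 0)"
    "nrm (cmul mul) (ccj cj) (ccj cj (a, l *\<^sub>R b)) = ((1 - l * l) *\<^sub>R r, 0)"
    using N N_cj nrm_cmul_scaleR_snd[of a l b] nrm_cmul_scaleR_snd[of "cj a" l "cj b"] CA_nrm_cj[OF b(1)]
    by (simp_all add: ccj_def cj_scaleR zero_prod_def r_def scaleR_diff_left)
  moreover have "((1 - l * l) *\<^sub>R r, 0) \<in> center (cmul mul)"
    using center_cmul[OF center_scaleR_closed[OF r(1)] center_reals[of 0]] by simp
  moreover have "invertible_el (cmul mul) (one, 0) ((1 - l * l) *\<^sub>R r, 0)"
    unfolding invertible_el_def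
    by (rule exI[of _ "((1 / (1 - l * l)) *\<^sub>R \<rho>, 0)"])
      (use l \<rho> in \<open>simp add: cmul_def mul_scaleR_left mul_scaleR_right\<close>)
  ultimately show ?thesis by (simp add: central_unit_norm_def)
qed

end

text \<open>The pointwise content of the tameness of \<open>\<I>(F)\<close> at \<open>z\<close> for \<open>X = F(z)\<close>, together with
  \<open>F\<^sub>2(z) \<in> C\<^sub>A\<close>, which the hypothesis on the spherical derivative provides.\<close>
definition tame_value :: "('a::real_vector \<Rightarrow> 'a \<Rightarrow> 'a) \<Rightarrow> 'a \<Rightarrow> ('a \<Rightarrow> 'a) \<Rightarrow> 'a \<times> 'a \<Rightarrow> bool" where
  "tame_value mul one cj X \<longleftrightarrow>
     nrm (cmul mul) (ccj cj) X \<in> reals_in one \<times> reals_in one \<and>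
     nrm (cmul mul) (ccj cj) (ccj cj X) = nrm (cmul mul) (ccj cj) X \<and>
     snd X \<in> CA mul one cj"

context alt_star_algebra
begin

lemma tame_value_cases:
  assumes ns: "nonsingular mul cj" and X: "tame_value mul one cj X"
  shows "X = 0 \<or> central_unit_norm (cmul mul) (one, 0) (ccj cj) X \<or>
    (\<forall>l. l * l \<noteq> 1 \<longrightarrow> central_unit_norm (cmul mul) (one, 0) (ccj cj) (fst X, l *\<^sub>R snd X))"
proof -
  obtain a b where X_eq: "X = (a, b)" by (cases X)
  obtain \<alpha> \<beta> where N: "nrm (cmul mul) (ccj cj) X = (\<alpha> *\<^sub>R one, \<beta> *\<^sub>R one)"
    using X by (auto simp: tame_value_def reals_in_def)
  have N_cj: "nrm (cmul mul) (ccj cj) (ccj cj X) = nrm (cmul mul) (ccj cj) X"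
    and b: "b \<in> CA mul one cj"
    using X by (simp_all add: tame_value_def X_eq)
  consider "(\<alpha>, \<beta>) \<noteq> (0, 0)" | "b = 0" "nrm (cmul mul) (ccj cj) X = 0"
    | "b \<noteq> 0" "nrm (cmul mul) (ccj cj) X = 0"
    using N by (force simp: zero_prod_def)
  then show ?thesis
  proof cases
    case 1
    then show ?thesis using central_unit_norm_cmul_reals[OF N _ N_cj] by blast
  next
    case 2
    then have "nrm mul cj a = 0"
      using fst_nrm_cmul[of mul cj X] by (simp add: X_eq zero_prod_def nrm_def)
    then show ?thesis
      using ns 2 by (simp add: nonsingular_def X_eq zero_prod_def)
  next
    case 3
    then show ?thesis
      using central_unit_norm_cmul_rescaled[of a b] N_cj b by (simp add: X_eq ccj_def)
  qed
qed

lemma zero_on_sphere_iff_nrm_cmul: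
  assumes ns: "nonsingular mul cj" and SA: "SA mul one cj \<noteq> {}"
    and X: "snd X \<in> CA mul one cj" "snd (nrm (cmul mul) (ccj cj) X) \<in> reals_in one"
  shows "(\<exists>J\<in>SA mul one cj. fst X + J \<star> snd X = 0) \<longleftrightarrow> nrm (cmul mul) (ccj cj) X = 0"
proof -
  have "fst X \<star> cj (snd X) + snd X \<star> cj (fst X) \<in> center mul"
    using X(2) center_reals by (auto simp: snd_nrm_cmul reals_in_def)
  then show ?thesis
    using zero_on_sphere_iff_nrm[OF ns SA X(1)]
    by (simp add: prod_eq_iff fst_nrm_cmul snd_nrm_cmul)
qed

lemma mul_eq_0_iff_nrm_real:
  assumes ns: "nonsingular mul cj" and a: "nrm mul cj a \<in> reals_in one" "nrm mul cj (cj a) = nrm mul cj a"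
  shows "a \<star> c = 0 \<longleftrightarrow> a = 0 \<or> c = 0"
proof (cases "a = 0")
  case False
  obtain \<alpha> where \<alpha>: "nrm mul cj a = \<alpha> *\<^sub>R one" using a(1) by (auto simp: reals_in_def)
  have "\<alpha> \<noteq> 0"
    using ns False \<alpha> by (auto simp: nonsingular_def)
  have "a \<star> ((1 / \<alpha>) *\<^sub>R cj a) = one" "((1 / \<alpha>) *\<^sub>R cj a) \<star> a = one"
    using \<alpha> a(2) \<open>\<alpha> \<noteq> 0\<close> by (simp_all add: nrm_def cj_cj mul_scaleR_left mul_scaleR_right)
  then have "((1 / \<alpha>) *\<^sub>R cj a) \<star> (a \<star> c) = c" by (rule inverse_cancel_left(1))
  then show ?thesis using False by auto
qed simp

lemma zero_on_sphere_cmul_iff_real: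
  assumes ns: "nonsingular mul cj" and SA: "SA mul one cj \<noteq> {}"
    and X: "tame_value mul one cj X" "snd X = 0" and Y: "snd Y = 0"
  shows "(\<exists>J\<in>SA mul one cj. fst (cmul mul X Y) + J \<star> snd (cmul mul X Y) = 0) \<longleftrightarrow>
    (\<exists>J\<in>SA mul one cj. fst X + J \<star> snd X = 0) \<or> (\<exists>J\<in>SA mul one cj. fst Y + J \<star> snd Y = 0)"
proof -
  have "nrm mul cj (fst X) \<in> reals_in one" "nrm mul cj (cj (fst X)) = nrm mul cj (fst X)"
    using X fst_nrm_cmul[of mul cj X] fst_nrm_cmul[of mul cj "ccj cj X"]
    by (auto simp: tame_value_def ccj_def nrm_def)
  then show ?thesis
    using mul_eq_0_iff_nrm_real[OF ns] SA X(2) Y by (auto simp: cmul_def)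
qed

end

section \<open>Multiplicativity of the norm on tame values\<close>

lemma isCont_eq_if_eventually_eq:
  fixes f g :: "'a::{perfect_space,t2_space} \<Rightarrow> 'b::t2_space"
  assumes "isCont f a" "isCont g a" "eventually (\<lambda>x. f x = g x) (at a)"
  shows "f a = g a"
proof -
  have "(g \<longlongrightarrow> f a) (at a)"
    using tendsto_cong[OF assms(3)] assms(1) by (simp add: continuous_at)
  then show ?thesis
    using assms(2) tendsto_unique[OF trivial_limit_at] by (auto simp: continuous_at)
qed

locale normed_alt_star_algebra = alt_star_algebra mul one cj
  for mul :: "'a::real_normed_vector \<Rightarrow> 'a \<Rightarrow> 'a" (infixl "\<star>" 70) and one cj +
  assumes bounded_bilinear_mul: "bounded_bilinear mul"
    and bounded_linear_cj: "bounded_linear cj"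
begin

lemma continuous_cmul [continuous_intros]:
  "continuous F f \<Longrightarrow> continuous F g \<Longrightarrow> continuous F (\<lambda>x. cmul mul (f x) (g x))"
  unfolding cmul_def
  by (intro continuous_intros bounded_bilinear.continuous[OF bounded_bilinear_mul])

lemma continuous_ccj [continuous_intros]:
  "continuous F f \<Longrightarrow> continuous F (\<lambda>x. ccj cj (f x))"
  unfolding ccj_def by (intro continuous_intros bounded_linear.continuous[OF bounded_linear_cj])

lemma continuous_nrm_cmul [continuous_intros]:
  "continuous F f \<Longrightarrow> continuous F (\<lambda>x. nrm (cmul mul) (ccj cj) (f x))"
  unfolding nrm_def by (intro continuous_intros)

lemma eq_at_tame_value:
  fixes \<phi> \<psi> :: "'a \<times> 'a \<Rightarrow> 'b::t2_space"
  assumes ns: "nonsingular mul cj"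
    and cont: "\<And>X. isCont \<phi> X" "\<And>X. isCont \<psi> X" and zero: "\<phi> 0 = \<psi> 0"
    and unit: "\<And>X. central_unit_norm (cmul mul) (one, 0) (ccj cj) X \<Longrightarrow> \<phi> X = \<psi> X"
    and X: "tame_value mul one cj X"
  shows "\<phi> X = \<psi> X"
  using tame_value_cases[OF ns X]
proof (elim disjE)
  assume rescaled: "\<forall>l. l * l \<noteq> 1 \<longrightarrow> central_unit_norm (cmul mul) (one, 0) (ccj cj) (fst X, l *\<^sub>R snd X)"
  define p where "p l = (fst X, l *\<^sub>R snd X)" for l :: real
  have p: "isCont p 1" unfolding p_def by (intro continuous_intros)
  have "eventually (\<lambda>l. l * l \<noteq> 1) (at (1::real))"
    unfolding eventually_at
    by (rule exI[of _ 1]) (auto simp: dist_real_def square_eq_1_iff)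
  then have "eventually (\<lambda>l. (\<phi> \<circ> p) l = (\<psi> \<circ> p) l) (at 1)"
    by eventually_elim (use rescaled unit in \<open>simp add: p_def\<close>)
  then have "(\<phi> \<circ> p) 1 = (\<psi> \<circ> p) 1"
    by (rule isCont_eq_if_eventually_eq[OF continuous_at_compose[OF p cont(1)]
          continuous_at_compose[OF p cont(2)]])
  then show ?thesis by (simp add: p_def)
qed (use zero unit in auto)

lemma nrm_cmul_mul_tame_value:
  assumes ns: "nonsingular mul cj" and X: "tame_value mul one cj X" and Y: "tame_value mul one cj Y"
  shows "nrm (cmul mul) (ccj cj) (cmul mul X Y)
    = cmul mul (nrm (cmul mul) (ccj cj) X) (nrm (cmul mul) (ccj cj) Y)"
proof -
  interpret C: alt_star_algebra "cmul mul" "(one, 0)" "ccj cj" by (rule alt_star_algebra_cmul)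
  have zero: "nrm (cmul mul) (ccj cj) 0 = 0" "cmul mul 0 Z = 0" "cmul mul Z 0 = 0" for Z
    by (simp_all add: nrm_def cmul_def ccj_def zero_prod_def)
  have unit_right: "nrm (cmul mul) (ccj cj) (cmul mul X' Y')
      = cmul mul (nrm (cmul mul) (ccj cj) X') (nrm (cmul mul) (ccj cj) Y')"
    if Y': "central_unit_norm (cmul mul) (one, 0) (ccj cj) Y'" and X': "tame_value mul one cj X'"
    for X' Y'
    by (rule eq_at_tame_value[OF ns _ _ _ _ X'])
      (auto simp: zero intro!: continuous_intros C.nrm_mul_central_unit[OF _ Y'])
  show ?thesis
    by (rule eq_at_tame_value[where \<phi> = "\<lambda>Y. nrm (cmul mul) (ccj cj) (cmul mul X Y)"
          and \<psi> = "\<lambda>Y. cmul mul (nrm (cmul mul) (ccj cj) X) (nrm (cmul mul) (ccj cj) Y)",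
          OF ns _ _ _ unit_right[OF _ X] Y])
      (auto simp: zero intro!: continuous_intros)
qed

lemma zero_on_sphere_cmul_iff:
  assumes ns: "nonsingular mul cj" and SA: "SA mul one cj \<noteq> {}"
    and X: "tame_value mul one cj X" and Y: "tame_value mul one cj Y"
    and XY: "snd (cmul mul X Y) \<in> CA mul one cj"
  shows "(\<exists>J\<in>SA mul one cj. fst (cmul mul X Y) + J \<star> snd (cmul mul X Y) = 0) \<longleftrightarrow>
    (\<exists>J\<in>SA mul one cj. fst X + J \<star> snd X = 0) \<or> (\<exists>J\<in>SA mul one cj. fst Y + J \<star> snd Y = 0)"
proof -
  have reals: "nrm (cmul mul) (ccj cj) X \<in> reals_in one \<times> reals_in one"
    "nrm (cmul mul) (ccj cj) Y \<in> reals_in one \<times> reals_in one"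
    using X Y by (simp_all add: tame_value_def)
  have XY_eq: "nrm (cmul mul) (ccj cj) (cmul mul X Y)
      = cmul mul (nrm (cmul mul) (ccj cj) X) (nrm (cmul mul) (ccj cj) Y)"
    by (rule nrm_cmul_mul_tame_value[OF ns X Y])
  have "snd (nrm (cmul mul) (ccj cj) (cmul mul X Y)) \<in> reals_in one"
    using reals unfolding XY_eq by (auto simp: reals_in_def cmul_reals)
  then have "(\<exists>J\<in>SA mul one cj. fst (cmul mul X Y) + J \<star> snd (cmul mul X Y) = 0)
      \<longleftrightarrow> nrm (cmul mul) (ccj cj) X = 0 \<or> nrm (cmul mul) (ccj cj) Y = 0"
    using zero_on_sphere_iff_nrm_cmul[OF ns SA XY] cmul_reals_eq_0_iff[OF reals] XY_eq by simp
  moreover have "snd (nrm (cmul mul) (ccj cj) Z) \<in> reals_in one" "snd Z \<in> CA mul one cj"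
    if "tame_value mul one cj Z" for Z
    using that by (auto simp: tame_value_def)
  ultimately show ?thesis
    using zero_on_sphere_iff_nrm_cmul[OF ns SA] X Y by simp
qed

end

section \<open>Slice functions\<close>

lemma stem_snd_eq_0_if_real:
  fixes H :: "complex \<Rightarrow> 'a::real_vector \<times> 'a"
  assumes "stem D H" "z \<in> D" "Im z = 0"
  shows "snd (H z) = 0"
proof -
  have "cnj z = z" using assms(3) by (simp add: complex_eq_iff)
  then have "snd (H z) = - snd (H z)"
    using assms(1,2) unfolding stem_def by (metis snd_conv)
  then show ?thesis by (simp add: eq_uminus_self_iff)
qed

context alt_star_algebra
begin

lemma stem_cmul: "stem D F \<Longrightarrow> stem D G \<Longrightarrow> stem D (\<lambda>z. cmul mul (F z) (G z))"
  by (simp add: stem_def cmul_def mul_minus_left mul_minus_right)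

lemma stem_ccj: "stem D F \<Longrightarrow> stem D (\<lambda>z. ccj cj (F z))"
  by (simp add: stem_def ccj_def cj_minus)

lemma OmegaD_memI: "z \<in> D \<Longrightarrow> J \<in> SA mul one cj \<Longrightarrow> Re z *\<^sub>R one + Im z *\<^sub>R J \<in> OmegaD mul one cj D"
  unfolding OmegaD_def by blast

lemma SA_not_real:
  assumes J: "J \<in> SA mul one cj" and one: "one \<noteq> 0"
  shows "J \<noteq> c *\<^sub>R one"
proof
  assume J_eq: "J = c *\<^sub>R one"
  then have "c *\<^sub>R one = - (c *\<^sub>R one)"
    using SA_cj[OF J] by (simp add: cj_scaleR cj_one)
  then have "J = 0" using J_eq one by (simp add: eq_uminus_self_iff)
  then show False using J one by (simp add: SA_def nrm_def)
qed

lemma slice_not_real: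
  assumes "J \<in> SA mul one cj" "one \<noteq> 0" "Im z \<noteq> 0"
  shows "Re z *\<^sub>R one + Im z *\<^sub>R J \<notin> reals_in one"
proof
  assume "Re z *\<^sub>R one + Im z *\<^sub>R J \<in> reals_in one"
  then obtain r where "Re z *\<^sub>R one + Im z *\<^sub>R J = r *\<^sub>R one" by (auto simp: reals_in_def)
  then have "Im z *\<^sub>R J = (r - Re z) *\<^sub>R one" by (simp add: algebra_simps)
  then have "(1 / Im z) *\<^sub>R (Im z *\<^sub>R J) = (1 / Im z) *\<^sub>R ((r - Re z) *\<^sub>R one)"
    by simp
  then have "J = ((r - Re z) / Im z) *\<^sub>R one"
    using assms(3) by simp
  then show False using SA_not_real[OF assms(1,2)] by blast
qed

text \<open>Conjugation recovers the real part of \<open>\<alpha> + \<beta> J\<close>, and the norm \<open>\<beta>\<^sup>2\<close> of its imaginary part.\<close>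
lemma slice_coords_unique:
  assumes one: "one \<noteq> 0" and J: "J \<in> SA mul one cj" and K: "K \<in> SA mul one cj"
    and eq: "a *\<^sub>R one + b *\<^sub>R J = c *\<^sub>R one + d *\<^sub>R K"
  shows "a = c" "b *\<^sub>R J = d *\<^sub>R K" "b = d \<or> b = - d"
proof -
  have cj_slice: "cj (e *\<^sub>R one + f *\<^sub>R L) = e *\<^sub>R one - f *\<^sub>R L"
    if "L \<in> SA mul one cj" for e f L
  proof -
    have "cj (e *\<^sub>R one + f *\<^sub>R L) = e *\<^sub>R one + f *\<^sub>R (- L)"
      by (simp only: cj_add cj_scaleR cj_one SA_cj[OF that])
    then show ?thesis by simp
  qed
  have "a *\<^sub>R one - b *\<^sub>R J = cj (a *\<^sub>R one + b *\<^sub>R J)" by (rule cj_slice[OF J, symmetric])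
  also have "\<dots> = c *\<^sub>R one - d *\<^sub>R K" unfolding eq by (rule cj_slice[OF K])
  finally have conj: "a *\<^sub>R one - b *\<^sub>R J = c *\<^sub>R one - d *\<^sub>R K" .
  have "a *\<^sub>R one + a *\<^sub>R one = (a *\<^sub>R one + b *\<^sub>R J) + (a *\<^sub>R one - b *\<^sub>R J)"
    by simp
  also have "\<dots> = (c *\<^sub>R one + d *\<^sub>R K) + (c *\<^sub>R one - d *\<^sub>R K)"
    by (simp only: eq conj)
  also have "\<dots> = c *\<^sub>R one + c *\<^sub>R one" by simp
  finally have "a *\<^sub>R one + a *\<^sub>R one = c *\<^sub>R one + c *\<^sub>R one" .
  then have "a *\<^sub>R one = c *\<^sub>R one" by (rule add_self_cancel)
  then show ac: "a = c" using one by simp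
  then show bd: "b *\<^sub>R J = d *\<^sub>R K" using eq by simp
  have nrm_SA: "nrm mul cj (e *\<^sub>R L) = (e * e) *\<^sub>R one" if "L \<in> SA mul one cj" for e L
    using that by (simp add: SA_def nrm_def cj_scaleR mul_scaleR_left mul_scaleR_right)
  have "(b * b) *\<^sub>R one = nrm mul cj (b *\<^sub>R J)" by (rule nrm_SA[OF J, symmetric])
  also have "\<dots> = (d * d) *\<^sub>R one" unfolding bd by (rule nrm_SA[OF K])
  finally have "b * b = d * d" using one by simp
  then show "b = d \<or> b = - d"
    using power2_eq_iff[of b d] by (simp add: power2_eq_square)
qed

lemma slice_value_unique:
  assumes one: "one \<noteq> 0" and H: "stem D H" and z: "z \<in> D" "w \<in> D"
    and J: "J \<in> SA mul one cj" and K: "K \<in> SA mul one cj"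
    and eq: "Re z *\<^sub>R one + Im z *\<^sub>R J = Re w *\<^sub>R one + Im w *\<^sub>R K"
  shows "fst (H w) + K \<star> snd (H w) = fst (H z) + J \<star> snd (H z)"
proof -
  have re: "Re w = Re z" and im: "Im z *\<^sub>R J = Im w *\<^sub>R K" "Im z = Im w \<or> Im z = - Im w"
    using slice_coords_unique[OF one J K eq] by simp_all
  consider "Im z = 0" | "Im w = Im z" "Im z \<noteq> 0" | "Im w = - Im z" "Im z \<noteq> 0"
    using im(2) by force
  then show ?thesis
  proof cases
    case 1
    then have "w = z" using re im(2) by (auto simp: complex_eq_iff)
    then show ?thesis using stem_snd_eq_0_if_real[OF H z(1) 1] by simp
  next
    case 2
    then have "w = z" "K = J" using re im(1) by (simp_all add: complex_eq_iff)
    then show ?thesis by simp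
  next
    case 3
    then have "Im z *\<^sub>R J = Im z *\<^sub>R (- K)" using im(1) by simp
    then have "J = - K" using 3(2) by (metis scaleR_cancel_left)
    then have "K = - J" by simp
    moreover have "w = cnj z" using re 3(1) by (simp add: complex_eq_iff)
    ultimately show ?thesis
      using H z(1) by (simp add: stem_def mul_minus_left mul_minus_right)
  qed
qed

lemma induced_eq:
  assumes one: "one \<noteq> 0" and H: "stem D H" and z: "z \<in> D" and J: "J \<in> SA mul one cj"
  shows "induced mul one cj D H (Re z *\<^sub>R one + Im z *\<^sub>R J) = fst (H z) + J \<star> snd (H z)"
proof -
  define P where "P = (\<lambda>(w, K). w \<in> D \<and> K \<in> SA mul one cj \<and>
    Re z *\<^sub>R one + Im z *\<^sub>R J = Re w *\<^sub>R one + Im w *\<^sub>R K)"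
  obtain w K where wK: "(SOME p. P p) = (w, K)" by (cases "SOME p. P p")
  have "P (z, J)" using z J by (simp add: P_def)
  then have "P (w, K)" using someI[of P] wK by simp
  then have "fst (H w) + K \<star> snd (H w) = fst (H z) + J \<star> snd (H z)"
    using slice_value_unique[OF one H z] J unfolding P_def by blast
  then show ?thesis
    unfolding induced_def using wK unfolding P_def by simp
qed

lemma ainv_SA_scaleR:
  assumes J: "J \<in> SA mul one cj" and \<beta>: "\<beta> \<noteq> 0"
  shows "ainv mul one (\<beta> *\<^sub>R J) = (- (1 / \<beta>)) *\<^sub>R J"
  unfolding ainv_def
proof (rule the_equality)
  show "(\<beta> *\<^sub>R J) \<star> ((- (1 / \<beta>)) *\<^sub>R J) = one \<and> ((- (1 / \<beta>)) *\<^sub>R J) \<star> (\<beta> *\<^sub>R J) = one"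
    using SA_mul_self[OF J] \<beta> by (simp add: mul_scaleR_left mul_scaleR_right mul_minus_left mul_minus_right)
next
  fix y assume "(\<beta> *\<^sub>R J) \<star> y = one \<and> y \<star> (\<beta> *\<^sub>R J) = one"
  then have "J \<star> (\<beta> *\<^sub>R (J \<star> y)) = J \<star> one"
    by (simp add: mul_scaleR_left)
  then have "\<beta> *\<^sub>R (- y) = J"
    using SA_mul_mul[OF J, of y] by (simp add: mul_scaleR_right mul_one_right)
  then show "y = (- (1 / \<beta>)) *\<^sub>R J"
    using \<beta> by (auto simp: field_simps)
qed

lemma sph_deriv_induced:
  assumes one: "one \<noteq> 0" and H: "stem D H" and D: "\<forall>z\<in>D. cnj z \<in> D"
    and z: "z \<in> D" and J: "J \<in> SA mul one cj" and Im: "Im z \<noteq> 0"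
  shows "sph_deriv mul one cj (induced mul one cj D H) (Re z *\<^sub>R one + Im z *\<^sub>R J)
    = (1 / Im z) *\<^sub>R snd (H z)"
proof -
  define x where "x = Re z *\<^sub>R one + Im z *\<^sub>R J"
  have cj_x: "cj x = Re (cnj z) *\<^sub>R one + Im (cnj z) *\<^sub>R J"
    unfolding x_def using SA_cj[OF J] by (simp add: cj_add cj_scaleR cj_one)
  have "imp cj x = Im z *\<^sub>R J"
    unfolding imp_def tr_def cj_x unfolding x_def by (simp add: algebra_simps flip: scaleR_add_left)
  moreover have "induced mul one cj D H x - induced mul one cj D H (cj x) = 2 *\<^sub>R (J \<star> snd (H z))"
    unfolding cj_x unfolding x_def using induced_eq[OF one H z J] induced_eq[OF one H _ J, of "cnj z"] D z H
    by (simp add: stem_def mul_minus_right scaleR_2)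
  ultimately have "sph_deriv mul one cj (induced mul one cj D H) x
      = ((- (1 / Im z)) *\<^sub>R J) \<star> (J \<star> snd (H z))"
    unfolding sph_deriv_def by (simp add: ainv_SA_scaleR[OF J Im] mul_scaleR_right)
  also have "\<dots> = (1 / Im z) *\<^sub>R snd (H z)"
    using SA_mul_mul[OF J] by (simp add: mul_scaleR_left mul_minus_left)
  finally show ?thesis unfolding x_def .
qed

lemma snd_CA_if_sph_deriv_CA:
  assumes one: "one \<noteq> 0" and H: "stem D H" and D: "\<forall>z\<in>D. cnj z \<in> D"
    and z: "z \<in> D" and J: "J \<in> SA mul one cj" and Im: "Im z \<noteq> 0"
    and CA: "sph_deriv mul one cj (induced mul one cj D H) (Re z *\<^sub>R one + Im z *\<^sub>R J) \<in> CA mul one cj"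
  shows "snd (H z) \<in> CA mul one cj"
  using CA_scaleR_cancel[of "1 / Im z"] CA Im unfolding sph_deriv_induced[OF one H D z J Im] by simp

lemma SA_coefficients_unique:
  assumes J: "J \<in> SA mul one cj"
    and eq: "a + J \<star> b = c + J \<star> d" "a + (- J) \<star> b = c + (- J) \<star> d"
  shows "a = c" "b = d"
proof -
  have "a + a = c + c"
    using arg_cong2[OF eq, of "(+)"] by (simp add: mul_minus_left algebra_simps)
  then show ac: "a = c" by (rule add_self_cancel)
  then have "J \<star> (J \<star> b) = J \<star> (J \<star> d)" using eq(1) by simp
  then show "b = d" using SA_mul_mul[OF J] by simp
qed

lemma tame_stem_values:
  assumes one: "one \<noteq> 0" and H: "stem D H" and z: "z \<in> D" and SA: "SA mul one cj \<noteq> {}"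
    and tame: "tame_stem mul one cj D H"
  shows "nrm (cmul mul) (ccj cj) (H z) \<in> reals_in one \<times> reals_in one"
    "nrm (cmul mul) (ccj cj) (ccj cj (H z)) = nrm (cmul mul) (ccj cj) (H z)"
proof -
  show "nrm (cmul mul) (ccj cj) (H z) \<in> reals_in one \<times> reals_in one"
    using tame z by (auto simp: tame_stem_def slice_preserving_stem_def stem_N_eq_nrm mem_Times_iff)
  define N M where "N z = nrm (cmul mul) (ccj cj) (H z)" and "M z = nrm (cmul mul) (ccj cj) (ccj cj (H z))"
    for z
  have stems: "stem D N" "stem D M"
    unfolding N_def M_def nrm_def by (intro stem_cmul stem_ccj H)+
  obtain J where J: "J \<in> SA mul one cj" using SA by blast
  have "fst (N z) + K \<star> snd (N z) = fst (M z) + K \<star> snd (M z)" if K: "K \<in> SA mul one cj" for K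
    using tame OmegaD_memI[OF z K] induced_eq[OF one stems(1) z K] induced_eq[OF one stems(2) z K]
    unfolding tame_stem_def stem_N_eq_nrm stem_cj_eq_ccj N_def M_def by simp
  then have "fst (N z) = fst (M z)" "snd (N z) = snd (M z)"
    using SA_coefficients_unique[OF J] J SA_uminus[OF J] by metis+
  then show "nrm (cmul mul) (ccj cj) (ccj cj (H z)) = nrm (cmul mul) (ccj cj) (H z)"
    by (simp add: N_def M_def prod_eq_iff)
qed

lemma sphere_of_slice:
  assumes one: "one \<noteq> 0" and J: "J \<in> SA mul one cj"
  shows "sphere_of mul one cj (a *\<^sub>R one + b *\<^sub>R J) = {a *\<^sub>R one + b *\<^sub>R I |I. I \<in> SA mul one cj}"
proof (intro set_eqI iffI)
  fix y assume "y \<in> sphere_of mul one cj (a *\<^sub>R one + b *\<^sub>R J)"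
  then obtain \<alpha> \<beta> I K where I: "I \<in> SA mul one cj" and K: "K \<in> SA mul one cj"
    and eq: "a *\<^sub>R one + b *\<^sub>R J = \<alpha> *\<^sub>R one + \<beta> *\<^sub>R K" and y: "y = \<alpha> *\<^sub>R one + \<beta> *\<^sub>R I"
    unfolding sphere_of_def by blast
  have "\<alpha> = a" "\<beta> = b \<or> \<beta> = - b"
    using slice_coords_unique[OF one J K eq] by auto
  then have "y = a *\<^sub>R one + b *\<^sub>R I \<or> y = a *\<^sub>R one + b *\<^sub>R (- I)"
    using y by auto
  then show "y \<in> {a *\<^sub>R one + b *\<^sub>R I |I. I \<in> SA mul one cj}"
    using I SA_uminus[OF I] by blast
qed (use J in \<open>auto simp: sphere_of_def\<close>)

lemma zeros_on_OmegaD_iff: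
  assumes one: "one \<noteq> 0" and H: "stem D H"
  shows "x \<in> zeros_on (OmegaD mul one cj D) (induced mul one cj D H) \<longleftrightarrow>
    (\<exists>z\<in>D. \<exists>J\<in>SA mul one cj. x = Re z *\<^sub>R one + Im z *\<^sub>R J \<and> fst (H z) + J \<star> snd (H z) = 0)"
proof
  assume "x \<in> zeros_on (OmegaD mul one cj D) (induced mul one cj D H)"
  then obtain z J where "z \<in> D" "J \<in> SA mul one cj" "x = Re z *\<^sub>R one + Im z *\<^sub>R J"
    "induced mul one cj D H x = 0"
    unfolding zeros_on_def OmegaD_def by blast
  then show "\<exists>z\<in>D. \<exists>J\<in>SA mul one cj. x = Re z *\<^sub>R one + Im z *\<^sub>R J \<and> fst (H z) + J \<star> snd (H z) = 0"
    using induced_eq[OF one H, of z J] by auto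
next
  assume "\<exists>z\<in>D. \<exists>J\<in>SA mul one cj. x = Re z *\<^sub>R one + Im z *\<^sub>R J \<and> fst (H z) + J \<star> snd (H z) = 0"
  then obtain z J where "z \<in> D" "J \<in> SA mul one cj" "x = Re z *\<^sub>R one + Im z *\<^sub>R J"
    "fst (H z) + J \<star> snd (H z) = 0"
    by blast
  then show "x \<in> zeros_on (OmegaD mul one cj D) (induced mul one cj D H)"
    using OmegaD_memI induced_eq[OF one H, of z J] by (simp add: zeros_on_def)
qed

lemma sphere_union_zeros_eq:
  assumes one: "one \<noteq> 0" and H: "stem D H"
  shows "(\<Union>x \<in> zeros_on (OmegaD mul one cj D) (induced mul one cj D H). sphere_of mul one cj x)
    = {Re z *\<^sub>R one + Im z *\<^sub>R I |z I. z \<in> D \<and> I \<in> SA mul one cj \<and>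
         (\<exists>J\<in>SA mul one cj. fst (H z) + J \<star> snd (H z) = 0)}"
  (is "?lhs = ?rhs")
proof -
  have "y \<in> ?lhs \<longleftrightarrow> y \<in> ?rhs" for y
  proof -
    have "y \<in> ?lhs \<longleftrightarrow> (\<exists>z\<in>D. \<exists>J\<in>SA mul one cj. fst (H z) + J \<star> snd (H z) = 0 \<and>
        y \<in> sphere_of mul one cj (Re z *\<^sub>R one + Im z *\<^sub>R J))"
      unfolding UN_iff Bex_def zeros_on_OmegaD_iff[OF one H] by blast
    also have "\<dots> \<longleftrightarrow> y \<in> ?rhs"
      by (auto simp: sphere_of_slice[OF one])
    finally show ?thesis .
  qed
  then show ?thesis by blast
qed

end

context normed_alt_star_algebra
begin

lemma zero_on_sphere_stem_mult_iff:
  assumes ns: "nonsingular mul cj" and one: "one \<noteq> 0" and SA: "SA mul one cj \<noteq> {}"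
    and D: "\<forall>z\<in>D. cnj z \<in> D" and z: "z \<in> D"
    and F: "stem D F" "tame_stem mul one cj D F" and G: "stem D G" "tame_stem mul one cj D G"
    and sd: "\<forall>x \<in> OmegaD mul one cj D - reals_in one.
        sph_deriv mul one cj (induced mul one cj D F) x \<in> CA mul one cj \<and>
        sph_deriv mul one cj (induced mul one cj D G) x \<in> CA mul one cj \<and>
        sph_deriv mul one cj (induced mul one cj D (stem_mult mul F G)) x \<in> CA mul one cj"
  shows "(\<exists>J\<in>SA mul one cj. fst (stem_mult mul F G z) + J \<star> snd (stem_mult mul F G z) = 0) \<longleftrightarrow>
    (\<exists>J\<in>SA mul one cj. fst (F z) + J \<star> snd (F z) = 0) \<or>
    (\<exists>J\<in>SA mul one cj. fst (G z) + J \<star> snd (G z) = 0)"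
proof -
  have FG: "stem D (stem_mult mul F G)"
    unfolding stem_mult_eq_cmul by (rule stem_cmul[OF F(1) G(1)])
  have tame: "tame_value mul one cj (H z)"
    if "stem D H" "tame_stem mul one cj D H" "snd (H z) \<in> CA mul one cj" for H
    using tame_stem_values[OF one that(1) z SA that(2)] that(3) by (simp add: tame_value_def)
  show ?thesis
  proof (cases "Im z = 0")
    case True
    then have "snd (F z) = 0" "snd (G z) = 0"
      using stem_snd_eq_0_if_real F(1) G(1) z by blast+
    then show ?thesis
      using zero_on_sphere_cmul_iff_real[OF ns SA tame[OF F]] by (simp add: stem_mult_eq_cmul CA_def)
  next
    case False
    obtain J where J: "J \<in> SA mul one cj" using SA by blast
    have "Re z *\<^sub>R one + Im z *\<^sub>R J \<in> OmegaD mul one cj D - reals_in one"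
      using OmegaD_memI[OF z J] slice_not_real[OF J one False] by blast
    then have "snd (F z) \<in> CA mul one cj" "snd (G z) \<in> CA mul one cj"
      "snd (stem_mult mul F G z) \<in> CA mul one cj"
      using sd snd_CA_if_sph_deriv_CA[OF one _ D z J False] F(1) G(1) FG by blast+
    then show ?thesis
      using zero_on_sphere_cmul_iff[OF ns SA tame[OF F] tame[OF G]] by (simp add: stem_mult_eq_cmul)
  qed
qed

end

lemma alt_star_alg_imp_normed_alt_star_algebra:
  fixes mul :: "'a::euclidean_space \<Rightarrow> 'a \<Rightarrow> 'a"
  assumes "alt_star_alg mul one cj"
  shows "normed_alt_star_algebra mul one cj"
proof -
  have mul: "bilinear mul" and cj: "linear cj" and cj_real: "\<forall>r. cj (r *\<^sub>R one) = r *\<^sub>R one"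
    using assms by (simp_all add: alt_star_alg_def)
  have "alt_star_algebra mul one cj"
  proof unfold_locales
    fix x y z :: 'a and c :: real
    show "mul (x + y) z = mul x z + mul y z" "mul x (y + z) = mul x y + mul x z"
      "mul (c *\<^sub>R x) y = c *\<^sub>R mul x y" "mul x (c *\<^sub>R y) = c *\<^sub>R mul x y"
      using mul by (simp_all add: bilinear_ladd bilinear_radd bilinear_lmul bilinear_rmul)
    show "cj (x + y) = cj x + cj y" "cj (c *\<^sub>R x) = c *\<^sub>R cj x"
      using cj by (simp_all add: linear_add linear_scale)
    show "cj one = one" using cj_real[rule_format, of 1] by simp
    show "mul one x = x" "mul x one = x" "assoc mul x x y = 0" "assoc mul y x x = 0"
      "cj (cj x) = x" "cj (mul x y) = mul (cj y) (cj x)"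
      using assms by (simp_all add: alt_star_alg_def)
  qed
  moreover have "bounded_bilinear mul" "bounded_linear cj"
    using mul cj by (simp_all add: bilinear_conv_bounded_bilinear linear_conv_bounded_linear)
  ultimately show ?thesis
    by (simp add: normed_alt_star_algebra_def normed_alt_star_algebra_axioms_def)
qed

theorem proposition5p17:
  fixes mul :: "'a::euclidean_space \<Rightarrow> 'a \<Rightarrow> 'a" and one :: 'a and cj :: "'a \<Rightarrow> 'a"
    and D :: "complex set" and F G :: "complex \<Rightarrow> 'a \<times> 'a"
  assumes alg: "alt_star_alg mul one cj"
    and nonsing: "nonsingular mul cj"
    and SA_ne: "SA mul one cj \<noteq> {}"
    and D_open: "open D" and D_conn: "connected D" and D_real: "D \<inter> \<real> \<noteq> {}"
    and D_cnj: "\<forall>z\<in>D. cnj z \<in> D"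
    and F_reg: "slice_regular_stem D F" and F_tame: "tame_stem mul one cj D F"
    and G_reg: "slice_regular_stem D G" and G_tame: "tame_stem mul one cj D G"
    and sd: "\<forall>x \<in> OmegaD mul one cj D - reals_in one.
        sph_deriv mul one cj (induced mul one cj D F) x \<in> CA mul one cj \<and>
        sph_deriv mul one cj (induced mul one cj D G) x \<in> CA mul one cj \<and>
        sph_deriv mul one cj (induced mul one cj D (stem_mult mul F G)) x \<in> CA mul one cj"
  shows "(\<Union>x \<in> zeros_on (OmegaD mul one cj D) (induced mul one cj D (stem_mult mul F G)).
            sphere_of mul one cj x)
       = (\<Union>x \<in> zeros_on (OmegaD mul one cj D) (induced mul one cj D F)
               \<union> zeros_on (OmegaD mul one cj D) (induced mul one cj D G).
            sphere_of mul one cj x)"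
proof -
  interpret normed_alt_star_algebra mul one cj
    by (rule alt_star_alg_imp_normed_alt_star_algebra[OF alg])
  have one: "one \<noteq> 0" using alg by (simp add: alt_star_alg_def)
  have F: "stem D F" and G: "stem D G"
    using F_reg G_reg by (simp_all add: slice_regular_stem_def)
  have FG: "stem D (stem_mult mul F G)"
    unfolding stem_mult_eq_cmul by (rule stem_cmul[OF F G])
  show ?thesis
    unfolding UN_Un sphere_union_zeros_eq[OF one F] sphere_union_zeros_eq[OF one G]
      sphere_union_zeros_eq[OF one FG]
    using zero_on_sphere_stem_mult_iff[OF nonsing one SA_ne D_cnj _ F F_tame G G_tame sd]
    by blast
qed

end
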